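(* Let $\delta,\theta\in[0,1)$. Let $\mathscr{H}$ be a complex Hilbert space with $\dim\mathscr{H}>1$, let $\mathscr{A}$ be a $C^*$-algebra with $\mathbb{K}(\mathscr{H})\subseteq\mathscr{A}\subseteq\mathbb{B}(\mathscr{H})$, let $\mathscr{E}$ be a full Hilbert $\mathscr{A}$-module, and let $S:\mathscr{E}\to\mathscr{E}$ be a nonzero bounded linear mapping satisfying $$|\langle Sx,Sy\rangle|=\|S\|^2\,|\langle x,y\rangle|\qquad(x,y\in\mathscr{E}).$$ If $T:\mathscr{E}\to\mathscr{E}$ is a linear mapping with $\|T-S\|\leq\theta\|S\|$, then $T$ is $(\delta,\varepsilon)$-orthogonality preserving, where $\varepsilon=\frac{\theta^2+2\theta+\delta}{(1-\theta)^2}$.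
   Context: $\mathbb{B}(\mathscr{H})$ denotes the bounded operators and $\mathbb{K}(\mathscr{H})$ the compact operators on $\mathscr{H}$. A Hilbert $\mathscr{A}$-module is a right $\mathscr{A}$-module $\mathscr{E}$ with an $\mathscr{A}$-valued inner product $\langle\cdot,\cdot\rangle$ ($\mathbb{C}$-linear and $\mathscr{A}$-linear in the second variable, $\langle x,y\rangle^*=\langle y,x\rangle$, $\langle x,x\rangle\geq0$ with equality iff $x=0$) that is complete in the norm $\|x\|=\|\langle x,x\rangle\|^{1/2}$; it is full if the closed linear span of $\{\langle x,y\rangle\}$ is $\mathscr{A}$. For $a\in\mathscr{A}$, $|a|=(a^*a)^{1/2}$. A mapping $T$ is $(\delta,\varepsilon)$-orthogonality preserving if for all $x,y$, $\|\langle x,y\rangle\|\leq\delta\|x\|\,\|y\|$ implies $\|\langle Tx,Ty\rangle\|\leq\varepsilon\|Tx\|\,\|Ty\|$. *)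

theory Defs
  imports "HOL-Analysis.Analysis"
begin

class cvec = ab_group_add +
  fixes scaleC :: "complex \<Rightarrow> 'a \<Rightarrow> 'a" (infixr \<open>*\<^sub>C\<close> 75)
  assumes scaleC_add_right: "a *\<^sub>C (x + y) = a *\<^sub>C x + a *\<^sub>C y"
    and scaleC_add_left: "(a + b) *\<^sub>C x = a *\<^sub>C x + b *\<^sub>C x"
    and scaleC_scaleC: "a *\<^sub>C (b *\<^sub>C x) = (a * b) *\<^sub>C x"
    and scaleC_one: "1 *\<^sub>C x = x"

text \<open>A complex inner product space; it is also a real inner product space
  (inner = real part of the complex inner product), which provides the norm,
  metric and topology.\<close>
class complex_inner = cvec + real_inner +
  fixes cinner :: "'a \<Rightarrow> 'a \<Rightarrow> complex"
  assumes scaleR_scaleC: "scaleR r x = complex_of_real r *\<^sub>C x"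
    and inner_Re_cinner: "inner x y = Re (cinner x y)"
    and cinner_add_right: "cinner x (y + z) = cinner x y + cinner x z"
    and cinner_scaleC_right: "cinner x (c *\<^sub>C y) = c * cinner x y"
    and cinner_commute: "cinner y x = cnj (cinner x y)"

class chilbert = complex_inner + complete_space

definition clinear :: "('a::cvec \<Rightarrow> 'b::cvec) \<Rightarrow> bool" where
  "clinear f \<longleftrightarrow> (\<forall>x y. f (x + y) = f x + f y) \<and> (\<forall>c x. f (c *\<^sub>C x) = c *\<^sub>C f x)"

definition bop :: "('h::chilbert \<Rightarrow> 'h) set" where
  "bop = {f. clinear f \<and> bounded_linear f}"

definition kop :: "('h::chilbert \<Rightarrow> 'h) set" where
  "kop = {f. f \<in> bop \<and> compact (closure (f ` cball 0 1))}"

definition adjoint :: "('h::chilbert \<Rightarrow> 'h) \<Rightarrow> ('h \<Rightarrow> 'h)" where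
  "adjoint f = (THE g. \<forall>x y. cinner (f x) y = cinner x (g y))"

definition positive_op :: "('h::chilbert \<Rightarrow> 'h) \<Rightarrow> bool" where
  "positive_op p \<longleftrightarrow> (\<forall>x. cinner x (p x) \<in> \<real> \<and> Re (cinner x (p x)) \<ge> 0)"

definition op_sqrt :: "('h::chilbert \<Rightarrow> 'h) \<Rightarrow> ('h \<Rightarrow> 'h)" where
  "op_sqrt b = (THE p. p \<in> bop \<and> positive_op p \<and> p \<circ> p = b)"

definition op_abs :: "('h::chilbert \<Rightarrow> 'h) \<Rightarrow> ('h \<Rightarrow> 'h)" where
  "op_abs a = op_sqrt (adjoint a \<circ> a)"

definition cstar_subalg :: "('h::chilbert \<Rightarrow> 'h) set \<Rightarrow> bool" where
  "cstar_subalg A \<longleftrightarrow> A \<subseteq> bop \<and> (\<lambda>h. 0) \<in> A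
     \<and> (\<forall>a\<in>A. \<forall>b\<in>A. (\<lambda>h. a h + b h) \<in> A)
     \<and> (\<forall>a\<in>A. \<forall>c. (\<lambda>h. c *\<^sub>C a h) \<in> A)
     \<and> (\<forall>a\<in>A. \<forall>b\<in>A. a \<circ> b \<in> A)
     \<and> (\<forall>a\<in>A. adjoint a \<in> A)
     \<and> (\<forall>s b. (\<forall>n. s n \<in> A) \<and> b \<in> bop \<and> (\<lambda>n. onorm (\<lambda>h. s n h - b h)) \<longlonglongrightarrow> 0 \<longrightarrow> b \<in> A)"

definition mnorm :: "('e \<Rightarrow> 'e \<Rightarrow> ('h::chilbert \<Rightarrow> 'h)) \<Rightarrow> 'e \<Rightarrow> real" where
  "mnorm ip x = sqrt (onorm (ip x x))"

definition hilbert_module ::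
  "('h::chilbert \<Rightarrow> 'h) set \<Rightarrow> ('e::cvec \<Rightarrow> ('h \<Rightarrow> 'h) \<Rightarrow> 'e) \<Rightarrow> ('e \<Rightarrow> 'e \<Rightarrow> ('h \<Rightarrow> 'h)) \<Rightarrow> bool"
  where
  "hilbert_module A act ip \<longleftrightarrow>
     \<comment> \<open>right A-module, compatible with the complex vector space structure\<close>
     (\<forall>x y. \<forall>a\<in>A. act (x + y) a = act x a + act y a)
   \<and> (\<forall>x. \<forall>a\<in>A. \<forall>b\<in>A. act x (\<lambda>h. a h + b h) = act x a + act x b)
   \<and> (\<forall>x. \<forall>a\<in>A. \<forall>b\<in>A. act (act x a) b = act x (a \<circ> b))
   \<and> (\<forall>x c. \<forall>a\<in>A. act (c *\<^sub>C x) a = c *\<^sub>C act x a \<and> act x (\<lambda>h. c *\<^sub>C a h) = c *\<^sub>C act x a)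
     \<comment> \<open>A-valued inner product\<close>
   \<and> (\<forall>x y. ip x y \<in> A)
   \<and> (\<forall>x y z. ip x (y + z) = (\<lambda>h. ip x y h + ip x z h))
   \<and> (\<forall>x y c. ip x (c *\<^sub>C y) = (\<lambda>h. c *\<^sub>C ip x y h))
   \<and> (\<forall>x y. \<forall>a\<in>A. ip x (act y a) = ip x y \<circ> a)
   \<and> (\<forall>x y. adjoint (ip x y) = ip y x)
   \<and> (\<forall>x. positive_op (ip x x))
   \<and> (\<forall>x. ip x x = (\<lambda>h. 0) \<longleftrightarrow> x = 0)
     \<comment> \<open>completeness with respect to \<open>mnorm\<close>\<close>
   \<and> (\<forall>s. (\<forall>e>0. \<exists>N. \<forall>m\<ge>N. \<forall>n\<ge>N. mnorm ip (s m - s n) < e)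
          \<longrightarrow> (\<exists>l. (\<lambda>n. mnorm ip (s n - l)) \<longlonglongrightarrow> 0))"

text \<open>Full: the closed linear span of the inner products is A.\<close>
definition full_module ::
  "('h::chilbert \<Rightarrow> 'h) set \<Rightarrow> ('e \<Rightarrow> 'e \<Rightarrow> ('h \<Rightarrow> 'h)) \<Rightarrow> bool" where
  "full_module A ip \<longleftrightarrow>
     (\<forall>a\<in>A. \<forall>e>0. \<exists>(n::nat) c xs ys.
        onorm (\<lambda>h. a h - (\<Sum>i<n. c i *\<^sub>C ip (xs i) (ys i) h)) < e)"

definition mbounded :: "('e \<Rightarrow> 'e \<Rightarrow> ('h::chilbert \<Rightarrow> 'h)) \<Rightarrow> ('e::cvec \<Rightarrow> 'e) \<Rightarrow> bool" where
  "mbounded ip f \<longleftrightarrow> (\<exists>K. \<forall>x. mnorm ip (f x) \<le> K * mnorm ip x)"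

definition mopnorm :: "('e \<Rightarrow> 'e \<Rightarrow> ('h::chilbert \<Rightarrow> 'h)) \<Rightarrow> ('e \<Rightarrow> 'e) \<Rightarrow> real" where
  "mopnorm ip f = Sup {mnorm ip (f x) | x. mnorm ip x \<le> 1}"

definition orth_preserving ::
  "('e \<Rightarrow> 'e \<Rightarrow> ('h::chilbert \<Rightarrow> 'h)) \<Rightarrow> real \<Rightarrow> real \<Rightarrow> ('e \<Rightarrow> 'e) \<Rightarrow> bool" where
  "orth_preserving ip \<delta> \<epsilon> T \<longleftrightarrow>
     (\<forall>x y. onorm (ip x y) \<le> \<delta> * mnorm ip x * mnorm ip y
        \<longrightarrow> onorm (ip (T x) (T y)) \<le> \<epsilon> * mnorm ip (T x) * mnorm ip (T y))"

end

(*
  Since \<langle>z, z\<rangle> is positive, |\<langle>z, z\<rangle>| = \<langle>z, z\<rangle> by uniqueness of positive square roots, so the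
  hypothesis on S gives \<langle>Sz, Sz\<rangle> = \<parallel>S\<parallel>\<^sup>2 \<langle>z, z\<rangle>, and polarization extends this to
  \<langle>Sx, Sy\<rangle> = \<parallel>S\<parallel>\<^sup>2 \<langle>x, y\<rangle>. Uniqueness of square roots is proved with the binomial series of
  sqrt (1 - t): after scaling, any positive root of A\<^sup>2 commutes with the series root, and commuting
  positive operators with equal squares coincide.

  Writing T = S + D with \<parallel>D\<parallel> \<le> \<theta>\<parallel>S\<parallel>, the Cauchy-Schwarz inequality of the module,
  \<parallel>\<langle>x, y\<rangle>\<parallel> \<le> \<parallel>x\<parallel> \<parallel>y\<parallel>, gives
  \<parallel>\<langle>Tx, Ty\<rangle>\<parallel> \<le> \<parallel>S\<parallel>\<^sup>2 (\<parallel>\<langle>x, y\<rangle>\<parallel> + (2\<theta> + \<theta>\<^sup>2) \<parallel>x\<parallel> \<parallel>y\<parallel>) and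
  \<parallel>Tx\<parallel> \<ge> (1 - \<theta>) \<parallel>S\<parallel> \<parallel>x\<parallel>; dividing yields \<epsilon>.
*)

theory Submission
  imports Defs
begin

lemma scaleC_zero_left [simp]: "(0::complex) *\<^sub>C (x::'a::cvec) = 0"
proof -
  have "(0::complex) *\<^sub>C x = 0 *\<^sub>C x + 0 *\<^sub>C x"
    by (simp flip: scaleC_add_left)
  then show ?thesis by simp
qed

lemma scaleC_zero_right [simp]: "c *\<^sub>C (0::'a::cvec) = 0"
proof -
  have "c *\<^sub>C (0::'a) = c *\<^sub>C 0 + c *\<^sub>C 0"
    by (simp flip: scaleC_add_right)
  then show ?thesis by simp
qed

lemma scaleC_minus_right: "c *\<^sub>C (- x) = - (c *\<^sub>C (x::'a::cvec))"
  by (metis add.right_inverse scaleC_add_right scaleC_zero_right add_eq_0_iff)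

lemma scaleC_minus_left: "(- c) *\<^sub>C x = - (c *\<^sub>C (x::'a::cvec))"
  by (metis add.right_inverse scaleC_add_left scaleC_zero_left add_eq_0_iff)

lemma scaleC_diff_right: "c *\<^sub>C (x - y) = c *\<^sub>C x - c *\<^sub>C (y::'a::cvec)"
  by (simp only: diff_conv_add_uminus scaleC_add_right scaleC_minus_right)

lemma scaleC_minus1: "(-1) *\<^sub>C x = - (x::'a::cvec)"
  by (simp add: scaleC_minus_left scaleC_one)

lemma cinner_add_left: "cinner (x + y) z = cinner x z + cinner y (z::'a::complex_inner)"
  by (metis cinner_add_right cinner_commute complex_cnj_add)

lemma cinner_scaleC_left: "cinner (c *\<^sub>C x) y = cnj c * cinner x (y::'a::complex_inner)"
  by (metis cinner_commute cinner_scaleC_right complex_cnj_mult)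

lemma cinner_zero_right [simp]: "cinner x (0::'a::complex_inner) = 0"
  using cinner_scaleC_right[of x 0 0] by simp

lemma cinner_minus_right: "cinner x (- y) = - cinner x (y::'a::complex_inner)"
  using cinner_scaleC_right[of x "-1" y] by (simp add: scaleC_minus1)

lemma cinner_minus_left: "cinner (- x) y = - cinner x (y::'a::complex_inner)"
  using cinner_scaleC_left[of "-1" x y] by (simp add: scaleC_minus1)

lemma cinner_diff_right: "cinner x (y - z) = cinner x y - cinner x (z::'a::complex_inner)"
  by (simp only: cinner_add_right cinner_minus_right diff_conv_add_uminus)

lemma cinner_diff_left: "cinner (x - y) z = cinner x z - cinner y (z::'a::complex_inner)"
  by (simp only: cinner_add_left cinner_minus_left diff_conv_add_uminus)

lemma cinner_scaleR_left: "cinner (r *\<^sub>R x) y = of_real r * cinner x (y::'a::complex_inner)"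
  by (simp add: scaleR_scaleC cinner_scaleC_left)

lemma cinner_scaleR_right: "cinner x (r *\<^sub>R y) = of_real r * cinner x (y::'a::complex_inner)"
  by (simp add: scaleR_scaleC cinner_scaleC_right)

lemma Im_cinner: "Im (cinner x y) = inner (\<i> *\<^sub>C x) (y::'a::complex_inner)"
  by (simp add: inner_Re_cinner cinner_scaleC_left)

lemma cinner_self: "cinner x x = of_real ((norm (x::'a::complex_inner))\<^sup>2)"
proof (rule complex_eqI)
  show "Im (cinner x x) = Im (of_real ((norm x)\<^sup>2))"
    using arg_cong[OF cinner_commute[of x x], of Im] by simp
  show "Re (cinner x x) = Re (of_real ((norm x)\<^sup>2))"
    by (simp add: power2_norm_eq_inner inner_Re_cinner)
qed

lemma cinner_self_eq_0: "cinner x x = 0 \<longleftrightarrow> x = (0::'a::complex_inner)"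
  by (simp add: cinner_self)

lemma cinner_ext: "(\<And>k. cinner k u = cinner k (v::'a::complex_inner)) \<Longrightarrow> u = v"
  by (metis cinner_diff_right cinner_self_eq_0 diff_self eq_iff_diff_eq_0)

lemma scaleC_scaleR: "r *\<^sub>R (c *\<^sub>C x) = c *\<^sub>C (r *\<^sub>R (x::'a::complex_inner))"
  by (simp only: scaleR_scaleC scaleC_scaleC mult.commute)

lemma norm_scaleC: "norm (c *\<^sub>C x) = cmod c * norm (x::'a::complex_inner)"
proof -
  have "of_real ((norm (c *\<^sub>C x))\<^sup>2) = cinner (c *\<^sub>C x) (c *\<^sub>C x)"
    by (rule cinner_self[symmetric])
  also have "\<dots> = (c * cnj c) * cinner x x"
    by (simp add: cinner_scaleC_left cinner_scaleC_right ac_simps)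
  also have "\<dots> = of_real ((cmod c * norm x)\<^sup>2)"
    by (simp only: complex_norm_square cinner_self power_mult_distrib of_real_mult)
  finally have "(norm (c *\<^sub>C x))\<^sup>2 = (cmod c * norm x)\<^sup>2"
    by (simp only: of_real_eq_iff)
  then show ?thesis
    by (simp add: power2_eq_iff_nonneg)
qed

lemma cinner_cauchy_schwarz: "cmod (cinner x y) \<le> norm x * norm (y::'a::complex_inner)"
proof (cases "cinner x y = 0")
  case False
  define z where "z = cinner x y"
  define u where "u = cnj z / of_real (cmod z)"
  have "u * z = (z * cnj z) / of_real (cmod z)"
    by (simp add: u_def mult.commute)
  also have "\<dots> = of_real ((cmod z)\<^sup>2) / of_real (cmod z)"
    by (simp only: complex_norm_square)
  finally have "u * z = of_real ((cmod z)\<^sup>2) / of_real (cmod z)" .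
  then have "u * z = of_real (cmod z)"
    using False by (simp add: z_def power2_eq_square)
  then have "cmod z = inner x (u *\<^sub>C y)"
    by (simp add: inner_Re_cinner cinner_scaleC_right z_def[symmetric])
  also have "\<dots> \<le> norm x * norm (u *\<^sub>C y)"
    by (rule norm_cauchy_schwarz)
  also have "\<dots> = norm x * norm y"
    using False by (simp add: norm_scaleC u_def z_def norm_divide)
  finally show ?thesis by (simp add: z_def)
qed simp

lemma bounded_linear_cinner_right: "bounded_linear (cinner (x::'a::complex_inner))"
proof (rule bounded_linear_intro[where K="norm x"])
  show "cinner x (r *\<^sub>R y) = r *\<^sub>R cinner x y" for r y
    by (simp add: cinner_scaleR_right scaleR_conv_of_real)
  show "norm (cinner x y) \<le> norm y * norm x" for y
    using cinner_cauchy_schwarz[of x y] by (simp add: mult.commute)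
qed (rule cinner_add_right)

lemma bounded_linear_scaleC: "bounded_linear (\<lambda>x::'a::complex_inner. c *\<^sub>C x)"
  by (rule bounded_linear_intro[where K="cmod c"])
     (simp_all add: scaleC_add_right scaleC_scaleR norm_scaleC mult.commute)

lemma clinear_add: "clinear f \<Longrightarrow> f (x + y) = f x + f y"
  by (simp add: clinear_def)

lemma clinear_scaleC: "clinear f \<Longrightarrow> f (c *\<^sub>C x) = c *\<^sub>C f x"
  by (simp add: clinear_def)

lemma clinear_zero: "clinear f \<Longrightarrow> f 0 = (0::'a::cvec)"
  using clinear_scaleC[of f 0 0] by simp

lemma clinear_minus: "clinear f \<Longrightarrow> f (- x) = - f (x::'a::cvec)"
  using clinear_scaleC[of f "-1" x] by (simp add: scaleC_minus1)

lemma clinear_diff: "clinear f \<Longrightarrow> f (x - y) = f x - f (y::'a::cvec)"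
  by (simp only: clinear_add clinear_minus diff_conv_add_uminus)

lemma clinear_scaleR:
  "clinear (f::'a::complex_inner \<Rightarrow> 'b::complex_inner) \<Longrightarrow> f (r *\<^sub>R x) = r *\<^sub>R f x"
  by (simp only: scaleR_scaleC clinear_scaleC)

lemma quadratic_nonneg_discriminant:
  fixes a b c :: real
  assumes nonneg: "\<And>t. 0 \<le> a * t\<^sup>2 + 2 * b * t + c" and "0 \<le> a"
  shows "b\<^sup>2 \<le> a * c"
proof (cases "a = 0")
  case True
  have "b = 0"
  proof (rule ccontr)
    assume "b \<noteq> 0"
    then show False
      using nonneg[of "- (c + 1) / (2 * b)"] True by (simp add: field_simps)
  qed
  then show ?thesis using True by simp
next
  case False
  then have "0 < a" using \<open>0 \<le> a\<close> by simp
  have "0 \<le> a * (- b / a)\<^sup>2 + 2 * b * (- b / a) + c"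
    by (rule nonneg)
  also have "\<dots> = c - b\<^sup>2 / a"
    using \<open>0 < a\<close> by (simp add: field_simps power2_eq_square)
  finally show ?thesis
    using \<open>0 < a\<close> by (simp add: field_simps)
qed


lemma convex_norm_diff_sq_le:
  fixes S :: "'a::real_inner set"
  assumes "convex S" "x \<in> S" "y \<in> S" "\<And>w. w \<in> S \<Longrightarrow> d \<le> norm (z - w)" "0 \<le> d"
  shows "(norm (x - y))\<^sup>2 \<le> 2 * (norm (z - x))\<^sup>2 + 2 * (norm (z - y))\<^sup>2 - 4 * d\<^sup>2"
proof -
  let ?a = "z - x" and ?b = "z - y"
  have "(1/2) *\<^sub>R (x + y) \<in> S"
    using convexD[OF assms(1-3), of "1/2" "1/2"] by (simp add: scaleR_add_right)
  then have "d \<le> norm (z - (1/2) *\<^sub>R (x + y))"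
    by (rule assms(4))
  moreover have "?a + ?b = 2 *\<^sub>R (z - (1/2) *\<^sub>R (x + y))"
    by (simp add: algebra_simps scaleR_2)
  ultimately have "(2 * d)\<^sup>2 \<le> (norm (?a + ?b))\<^sup>2"
    using assms(5) by (intro power_mono) auto
  moreover have "(norm (?a + ?b))\<^sup>2 + (norm (?a - ?b))\<^sup>2 = 2 * (norm ?a)\<^sup>2 + 2 * (norm ?b)\<^sup>2"
    by (simp add: power2_norm_eq_inner inner_add_left inner_add_right inner_diff_left
        inner_diff_right inner_commute)
  moreover have "norm (?a - ?b) = norm (x - y)"
    by (simp add: norm_minus_commute)
  ultimately show ?thesis
    by (simp add: power_mult_distrib)
qed

lemma convex_minimizing_sequence_Cauchy:
  fixes S :: "'a::real_inner set"
  assumes "convex S" and xs: "\<And>n. xs n \<in> S" and d: "0 \<le> d" "\<And>x. x \<in> S \<Longrightarrow> d \<le> norm (z - x)"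
    and xs_dist: "\<And>n. norm (z - xs n) < d + 1 / Suc n"
  shows "Cauchy xs"
proof -
  have sq: "(norm (z - xs n))\<^sup>2 \<le> d\<^sup>2 + (2 * d + 1) / Suc n" for n
  proof -
    define e where "e = 1 / real (Suc n)"
    have "0 < e" "e \<le> 1" by (simp_all add: e_def)
    have "(norm (z - xs n))\<^sup>2 \<le> (d + e)\<^sup>2"
      using xs_dist[of n] by (intro power_mono) (auto simp: e_def)
    also have "\<dots> = d\<^sup>2 + 2 * d * e + e * e"
      by (simp add: power2_eq_square algebra_simps)
    also have "\<dots> \<le> d\<^sup>2 + 2 * d * e + e"
      using \<open>0 < e\<close> \<open>e \<le> 1\<close> by (simp add: mult_left_le_one_le)
    finally show ?thesis by (simp add: e_def add_divide_distrib)
  qed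
  have dist_sq: "(norm (xs m - xs n))\<^sup>2 \<le> 2 * ((2 * d + 1) / Suc m) + 2 * ((2 * d + 1) / Suc n)" for m n
    using convex_norm_diff_sq_le[OF \<open>convex S\<close> xs xs d(2) d(1), of m n] sq[of m] sq[of n] by linarith
  show ?thesis
  proof (rule CauchyI)
    fix e :: real
    assume "0 < e"
    obtain N where "4 * (2 * d + 1) / e\<^sup>2 < real N"
      using reals_Archimedean2 by blast
    then have "4 * (2 * d + 1) < e\<^sup>2 * real N"
      using \<open>0 < e\<close> by (simp add: pos_divide_less_eq mult.commute)
    also have "\<dots> \<le> e\<^sup>2 * real (Suc N)"
      by (intro mult_left_mono) auto
    finally have N: "4 * (2 * d + 1) / real (Suc N) < e\<^sup>2"
      by (simp add: pos_divide_less_eq mult.commute)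
    have "norm (xs m - xs n) < e" if "m \<ge> N" "n \<ge> N" for m n
    proof -
      have "(2 * d + 1) / real (Suc m) \<le> (2 * d + 1) / Suc N"
        "(2 * d + 1) / real (Suc n) \<le> (2 * d + 1) / Suc N"
        using that d by (auto intro!: divide_left_mono)
      then have "(norm (xs m - xs n))\<^sup>2 < e\<^sup>2"
        using dist_sq[of m n] N by linarith
      then show ?thesis
        using \<open>0 < e\<close> by (simp add: power2_less_imp_less)
    qed
    then show "\<exists>M. \<forall>m\<ge>M. \<forall>n\<ge>M. norm (xs m - xs n) < e" by blast
  qed
qed

lemma nearest_point_exists:
  fixes S :: "'a::{real_inner,complete_space} set"
  assumes "closed S" "convex S" "S \<noteq> {}"
  shows "\<exists>m\<in>S. \<forall>x\<in>S. norm (z - m) \<le> norm (z - x)"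
proof -
  define d where "d = Inf ((\<lambda>x. norm (z - x)) ` S)"
  have bdd: "bdd_below ((\<lambda>x. norm (z - x)) ` S)"
    by (auto intro!: bdd_belowI[of _ 0])
  have d_le: "d \<le> norm (z - x)" if "x \<in> S" for x
    using that bdd by (auto simp: d_def intro!: cInf_lower)
  have "0 \<le> d"
    using \<open>S \<noteq> {}\<close> by (auto simp: d_def intro!: cInf_greatest)
  have "\<exists>x\<in>S. norm (z - x) < d + 1 / Suc n" for n
    using cInf_lessD[of "(\<lambda>x. norm (z - x)) ` S" "d + 1 / Suc n"] \<open>S \<noteq> {}\<close>
    by (auto simp: d_def)
  then obtain xs where xs: "\<And>n. xs n \<in> S" and xs_dist: "\<And>n. norm (z - xs n) < d + 1 / Suc n"
    by metis
  have "Cauchy xs"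
    by (rule convex_minimizing_sequence_Cauchy[OF \<open>convex S\<close> xs \<open>0 \<le> d\<close> d_le xs_dist])
  then obtain m where lim: "xs \<longlonglongrightarrow> m"
    using Cauchy_convergent_iff convergent_def by blast
  have "m \<in> S"
    using \<open>closed S\<close> xs lim by (auto simp: closed_sequential_limits)
  moreover have "norm (z - m) \<le> d"
  proof (rule LIMSEQ_le)
    show "(\<lambda>n. norm (z - xs n)) \<longlonglongrightarrow> norm (z - m)"
      by (intro tendsto_intros lim)
    show "(\<lambda>n. d + 1 / real (Suc n)) \<longlonglongrightarrow> d"
      using tendsto_add[OF tendsto_const LIMSEQ_inverse_real_of_nat, of d]
      by (simp add: inverse_eq_divide)
    show "\<exists>N. \<forall>n\<ge>N. norm (z - xs n) \<le> d + 1 / real (Suc n)"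
      using xs_dist less_imp_le by blast
  qed
  ultimately show ?thesis
    using d_le order_trans by blast
qed

lemma nearest_point_subspace_orthogonal:
  fixes M :: "'a::real_inner set"
  assumes "subspace M" "m \<in> M" "\<And>x. x \<in> M \<Longrightarrow> norm (z - m) \<le> norm (z - x)" "x \<in> M"
  shows "inner (z - m) x = 0"
proof -
  define u where "u = z - m"
  have "0 \<le> (norm x)\<^sup>2 * t\<^sup>2 + 2 * (- inner u x) * t + 0" for t
  proof -
    have "m + t *\<^sub>R x \<in> M"
      using assms by (simp add: subspace_add subspace_scale)
    from assms(3)[OF this] have "norm u \<le> norm (u - t *\<^sub>R x)"
      by (simp add: u_def algebra_simps)
    then have "(norm u)\<^sup>2 \<le> (norm (u - t *\<^sub>R x))\<^sup>2"
      by (simp add: power_mono)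
    also have "\<dots> = (norm u)\<^sup>2 - 2 * t * inner u x + t\<^sup>2 * (norm x)\<^sup>2"
      unfolding power2_norm_eq_inner
      by (simp add: inner_diff_left inner_diff_right inner_commute[of x u] algebra_simps power2_eq_square)
    finally show ?thesis
      by (simp add: algebra_simps)
  qed
  from quadratic_nonneg_discriminant[OF this] show ?thesis
    by (simp add: u_def)
qed

lemma riesz_representation_real:
  fixes g :: "'a::{real_inner,complete_space} \<Rightarrow> real"
  assumes "bounded_linear g"
  shows "\<exists>w. \<forall>x. g x = inner w x"
proof (cases "\<forall>x. g x = 0")
  case False
  interpret g: bounded_linear g by fact
  obtain z0 where "g z0 \<noteq> 0"
    using False by auto
  define z where "z = (1 / g z0) *\<^sub>R z0"
  have gz: "g z = 1"
    using \<open>g z0 \<noteq> 0\<close> by (simp add: z_def g.scaleR)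
  define M where "M = g -` {0}"
  have "subspace M"
    by (simp add: M_def subspace_def g.add g.scaleR g.zero)
  have "closed M"
    unfolding M_def by (intro closed_vimage closed_singleton linear_continuous_on assms)
  obtain m where "m \<in> M" and nearest: "\<And>x. x \<in> M \<Longrightarrow> norm (z - m) \<le> norm (z - x)"
    using nearest_point_exists[OF \<open>closed M\<close> subspace_imp_convex[OF \<open>subspace M\<close>], of z]
      subspace_0[OF \<open>subspace M\<close>] by blast
  define u where "u = z - m"
  have gu: "g u = 1"
    using \<open>m \<in> M\<close> by (simp add: u_def g.diff gz M_def)
  then have "inner u u \<noteq> 0"
    using g.zero by auto
  have "g x = inner ((1 / inner u u) *\<^sub>R u) x" for x
  proof -
    have "x - g x *\<^sub>R u \<in> M"
      by (simp add: M_def g.diff g.scaleR gu)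
    then have "inner u (x - g x *\<^sub>R u) = 0"
      using nearest_point_subspace_orthogonal[OF \<open>subspace M\<close> \<open>m \<in> M\<close> nearest]
      by (simp add: u_def)
    then show ?thesis
      using \<open>inner u u \<noteq> 0\<close> by (simp add: inner_diff_right)
  qed
  then show ?thesis by blast
qed (intro exI[of _ 0]; simp)

lemma adjoint_exists:
  fixes a :: "'h::chilbert \<Rightarrow> 'h"
  assumes "clinear a" "bounded_linear a"
  shows "\<exists>b. \<forall>x y. cinner (a x) y = cinner x (b y)"
proof -
  have "\<exists>w. \<forall>x. inner (a x) y = inner w x" for y
    by (rule riesz_representation_real)
       (rule bounded_linear_compose[OF bounded_linear_inner_left \<open>bounded_linear a\<close>])
  then obtain b where b: "\<And>x y. inner (a x) y = inner (b y) x"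
    by metis
  \<comment> \<open>the imaginary part is the real part at \<open>\<i> *\<^sub>C x\<close>\<close>
  have "cinner (a x) y = cinner x (b y)" for x y
    using b[of x y] b[of "\<i> *\<^sub>C x" y] clinear_scaleC[OF \<open>clinear a\<close>, of \<i> x]
    by (intro complex_eqI) (simp_all add: Im_cinner inner_Re_cinner[symmetric] inner_commute)
  then show ?thesis by blast
qed

lemma adjoint_eqI:
  assumes "\<And>x y. cinner (a x) y = cinner x (b y)"
  shows "adjoint a = (b::'h::chilbert \<Rightarrow> 'h)"
  unfolding adjoint_def
proof (rule the_equality)
  fix g
  assume "\<forall>x y. cinner (a x) y = cinner x (g y)"
  then show "g = b"
    using assms by (intro ext cinner_ext) simp
qed (use assms in blast)

lemma cinner_adjoint:
  assumes "clinear a" "bounded_linear (a::'h::chilbert \<Rightarrow> 'h)"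
  shows "cinner (a x) y = cinner x (adjoint a y)"
  using adjoint_exists[OF assms] adjoint_eqI by metis


lemma positive_op_Im: "positive_op p \<Longrightarrow> Im (cinner z (p z)) = 0"
  unfolding positive_op_def by (simp add: complex_is_Real_iff)

lemma positive_op_Re: "positive_op p \<Longrightarrow> 0 \<le> Re (cinner z (p z))"
  unfolding positive_op_def by simp

lemma positive_op_scaleR:
  assumes "positive_op X" "0 \<le> r"
  shows "positive_op (\<lambda>h. r *\<^sub>R X (h::'h::chilbert))"
  using assms positive_op_Im[OF assms(1)] positive_op_Re[OF assms(1)]
  by (simp add: positive_op_def cinner_scaleR_right complex_is_Real_iff)

lemma positive_op_selfadjoint:
  assumes "clinear p" "positive_op p"
  shows "cinner (p x) y = cinner x (p (y::'h::chilbert))"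
proof -
  define B where "B u v = cinner u (p v)" for u v
  have real: "Im (B z z) = 0" for z
    using positive_op_Im[OF assms(2)] by (simp add: B_def)
  have "B (x + y) (x + y) = B x x + B x y + B y x + B y y"
    by (simp add: B_def clinear_add[OF assms(1)] cinner_add_left cinner_add_right)
  with real[of "x + y"] real[of x] real[of y] have "Im (B x y) + Im (B y x) = 0"
    by simp
  moreover have "B (x + \<i> *\<^sub>C y) (x + \<i> *\<^sub>C y) = B x x + \<i> * B x y - \<i> * B y x + B y y"
    by (simp add: B_def clinear_add[OF assms(1)] clinear_scaleC[OF assms(1)] cinner_add_left
        cinner_add_right cinner_scaleC_left cinner_scaleC_right algebra_simps)
  with real[of "x + \<i> *\<^sub>C y"] real[of x] real[of y] have "Re (B x y) - Re (B y x) = 0"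
    by simp
  ultimately have "B y x = cnj (B x y)"
    by (simp add: complex_eq_iff)
  then show ?thesis
    by (simp add: B_def cinner_commute[of "p x"])
qed

lemma adjoint_positive_op: "clinear p \<Longrightarrow> positive_op p \<Longrightarrow> adjoint p = (p::'h::chilbert \<Rightarrow> 'h)"
  by (rule adjoint_eqI) (simp add: positive_op_selfadjoint)

lemma positive_op_cinner_eq_0:
  fixes X :: "'h::chilbert \<Rightarrow> 'h"
  assumes "clinear X" "positive_op X" "cinner k (X k) = 0"
  shows "X k = 0"
proof -
  define l where "l = X k"
  have "0 \<le> Re (cinner l (X l)) * t\<^sup>2 + 2 * (norm l)\<^sup>2 * t + 0" for t :: real
  proof -
    have "cinner k (X l) = cinner (X k) l"
      by (rule positive_op_selfadjoint[OF assms(1,2), symmetric])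
    then have "cinner (k + t *\<^sub>R l) (X (k + t *\<^sub>R l))
        = of_real (2 * t * (norm l)\<^sup>2) + of_real (t\<^sup>2) * cinner l (X l)"
      using assms(3)
      by (simp add: clinear_add[OF assms(1)] clinear_scaleR[OF assms(1)] cinner_add_left
          cinner_add_right cinner_scaleR_left cinner_scaleR_right l_def[symmetric] cinner_self
          algebra_simps power2_eq_square)
    with positive_op_Re[OF assms(2), of "k + t *\<^sub>R l"] show ?thesis
      by (simp add: algebra_simps)
  qed
  from quadratic_nonneg_discriminant[OF this] positive_op_Re[OF assms(2)] show ?thesis
    by (simp add: l_def)
qed

text \<open>For \<open>k = X h - Z h\<close> we get \<open>X k + Z k = (X\<^sup>2 - Z\<^sup>2) h = 0\<close>, so both quadratic forms vanish at \<open>k\<close>.\<close>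

lemma positive_op_commuting_square_eq:
  fixes X Z :: "'h::chilbert \<Rightarrow> 'h"
  assumes X: "clinear X" "positive_op X" and Z: "clinear Z" "positive_op Z"
    and comm: "\<And>h. X (Z h) = Z (X h)" and sq: "\<And>h. X (X h) = Z (Z h)"
  shows "X h = Z h"
proof -
  define k where "k = X h - Z h"
  have "X k + Z k = 0"
    by (simp add: k_def clinear_diff[OF X(1)] clinear_diff[OF Z(1)] comm sq)
  then have "cinner k (X k) + cinner k (Z k) = 0"
    by (metis cinner_add_right cinner_zero_right)
  then have "cinner k (X k) = 0" "cinner k (Z k) = 0"
    using positive_op_Re[OF X(2), of k] positive_op_Re[OF Z(2), of k]
      positive_op_Im[OF X(2), of k] positive_op_Im[OF Z(2), of k]
    by (simp_all add: complex_eq_iff)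
  then have "X k = 0" "Z k = 0"
    using positive_op_cinner_eq_0 X Z by blast+
  have "cinner k k = cinner k (X h) - cinner k (Z h)"
    by (simp add: k_def cinner_diff_right)
  also have "\<dots> = cinner (X k) h - cinner (Z k) h"
    by (simp add: positive_op_selfadjoint[OF X] positive_op_selfadjoint[OF Z])
  finally have "cinner k k = 0"
    using \<open>X k = 0\<close> \<open>Z k = 0\<close> by (simp add: cinner_commute[of _ h])
  then show ?thesis
    by (simp add: k_def cinner_self_eq_0)
qed


text \<open>The Taylor coefficients of \<open>sqrt (1 - t)\<close>.\<close>

definition sqrt_coeff :: "nat \<Rightarrow> real" where
  "sqrt_coeff n = (-1) ^ n * ((1/2) gchoose n)"

lemma sqrt_coeff_0 [simp]: "sqrt_coeff 0 = 1"
  by (simp add: sqrt_coeff_def)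

lemma sqrt_coeff_nonpos: "n \<ge> 1 \<Longrightarrow> sqrt_coeff n \<le> 0"
proof -
  assume "n \<ge> 1"
  then obtain k where k: "n = Suc k"
    by (cases n) auto
  have "pochhammer (-1/2::real) (Suc k) = (-1/2) * pochhammer (1/2) k"
    by (simp add: pochhammer_rec)
  moreover have "0 < pochhammer (1/2::real) k"
    by (rule pochhammer_pos) simp
  ultimately show ?thesis
    by (simp add: sqrt_coeff_def gbinomial_pochhammer k divide_nonpos_pos)
qed

lemma sum_sqrt_coeff_nonneg: "0 \<le> (\<Sum>k\<le>n. sqrt_coeff k)"
proof -
  have "(\<Sum>k\<le>n. sqrt_coeff k) = (\<Sum>k\<le>n. ((1/2::real) gchoose k) * (-1) ^ k)"
    by (simp add: sqrt_coeff_def mult.commute)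
  also have "\<dots> = (-1) ^ n * ((1/2 - 1) gchoose n)"
    by (rule gbinomial_sum_lower_neg)
  also have "\<dots> = pochhammer (1/2) n / fact n"
    by (simp add: gbinomial_pochhammer)
  finally show ?thesis
    by (simp add: pochhammer_pos less_imp_le)
qed

lemma summable_abs_sqrt_coeff: "summable (\<lambda>n. \<bar>sqrt_coeff n\<bar>)"
proof (rule bounded_imp_summable[where B = 2])
  fix n
  have "(\<Sum>k\<le>n. \<bar>sqrt_coeff k\<bar>) = (\<Sum>k\<le>n. (if k = 0 then 2 else 0) - sqrt_coeff k)"
    by (intro sum.cong) (auto simp: abs_of_nonpos sqrt_coeff_nonpos)
  also have "\<dots> = 2 - (\<Sum>k\<le>n. sqrt_coeff k)"
    by (simp add: sum_subtractf)
  finally show "(\<Sum>k\<le>n. \<bar>sqrt_coeff k\<bar>) \<le> 2"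
    using sum_sqrt_coeff_nonneg[of n] by simp
qed simp

lemma summable_sqrt_coeff: "summable sqrt_coeff"
  using summable_abs_sqrt_coeff by (rule summable_rabs_cancel)

lemma suminf_sqrt_coeff_nonneg: "0 \<le> (\<Sum>n. sqrt_coeff n)"
  using summable_LIMSEQ'[OF summable_sqrt_coeff]
  by (rule LIMSEQ_le_const) (auto intro: sum_sqrt_coeff_nonneg)

text \<open>The coefficient form of \<open>sqrt (1 - t) * sqrt (1 - t) = 1 - t\<close>, via Vandermonde's identity.\<close>

lemma sqrt_coeff_convolution:
  "(\<Sum>k\<le>N. sqrt_coeff k * sqrt_coeff (N - k)) = (if N = 0 then 1 else if N = 1 then -1 else 0)"
proof -
  have "(\<Sum>k\<le>N. sqrt_coeff k * sqrt_coeff (N - k))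
      = (\<Sum>k\<le>N. (-1) ^ N * (((1/2::real) gchoose k) * ((1/2) gchoose (N - k))))"
  proof (rule sum.cong[OF refl])
    fix k
    assume "k \<in> {..N}"
    then have "(-1::real) ^ k * (-1) ^ (N - k) = (-1) ^ N"
      by (simp flip: power_add)
    then show "sqrt_coeff k * sqrt_coeff (N - k) = (-1) ^ N * (((1/2::real) gchoose k) * ((1/2) gchoose (N - k)))"
      by (simp add: sqrt_coeff_def mult_ac)
  qed
  also have "\<dots> = (-1) ^ N * ((1::real) gchoose N)"
    using gbinomial_Vandermonde[of "1/2::real" "1/2" N]
    by (simp add: atLeast0AtMost flip: sum_distrib_left)
  also have "((1::real) gchoose N) = of_nat (1 choose N)"
    using binomial_gbinomial[of 1 N, where 'a=real] by simp
  finally show ?thesis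
    by (cases N) (auto simp: binomial_eq_0)
qed


lemma infsum_eq_suminf_norm_summable:
  fixes f :: "nat \<Rightarrow> 'a::banach"
  assumes "summable (\<lambda>n. norm (f n))"
  shows "infsum f UNIV = suminf f"
  by (rule infsumI, rule norm_summable_imp_has_sum[OF assms summable_sums[OF summable_norm_cancel[OF assms]]])

lemma infsum_nat_prod_diagonal:
  fixes f :: "nat \<times> nat \<Rightarrow> 'a::banach"
  assumes "f summable_on UNIV"
  shows "infsum f UNIV = infsum (\<lambda>N. \<Sum>k\<le>N. f (k, N - k)) UNIV"
proof -
  define h where "h = (\<lambda>(N::nat, k::nat). (k, N - k))"
  define D where "D = Sigma (UNIV::nat set) (\<lambda>N. {..N})"
  have bij: "bij_betw h D UNIV"
    by (rule bij_betwI[where g = "\<lambda>(m, n). (m + n, m)"]) (auto simp: D_def h_def)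
  have "infsum f UNIV = infsum (\<lambda>x. f (h x)) D"
    by (rule infsum_reindex_bij_betw[OF bij, symmetric])
  also have "\<dots> = infsum (\<lambda>N. infsum (\<lambda>k. f (h (N, k))) {..N}) UNIV"
    unfolding D_def
    by (rule infsum_Sigma_banach[symmetric])
       (use summable_on_reindex_bij_betw[OF bij, of f] assms D_def in simp)
  also have "\<dots> = infsum (\<lambda>N. \<Sum>k\<le>N. f (k, N - k)) UNIV"
    by (simp add: h_def)
  finally show ?thesis .
qed

lemma abs_summable_on_scaleR_shift:
  fixes a b :: "nat \<Rightarrow> real" and v :: "nat \<Rightarrow> 'a::banach"
  assumes a: "summable (\<lambda>n. \<bar>a n\<bar>)" and b: "summable (\<lambda>n. \<bar>b n\<bar>)"
    and v: "\<And>n. norm (v n) \<le> K"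
  shows "(\<lambda>(m, n). (a m * b n) *\<^sub>R v (m + n)) abs_summable_on UNIV"
proof -
  have "0 \<le> K"
    using v[of 0] norm_ge_zero order.trans by blast
  define g where "g = (\<lambda>(m::nat, n::nat). \<bar>a m\<bar> * (\<bar>b n\<bar> * K))"
  have bK: "(\<lambda>n. \<bar>b n\<bar> * K) summable_on UNIV"
    using \<open>0 \<le> K\<close> by (intro norm_summable_imp_summable_on) (simp add: summable_mult2 b)
  have "(\<lambda>x. norm (g x)) summable_on Sigma UNIV (\<lambda>_. UNIV)"
  proof (subst Infinite_Sum.abs_summable_on_Sigma_iff, intro conjI ballI)
    show "(\<lambda>n. norm (g (m, n))) summable_on UNIV" for m :: nat
      using summable_on_cmult_right[OF bK, of "\<bar>a m\<bar>"] by (simp add: g_def \<open>0 \<le> K\<close> abs_mult)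
    have "0 \<le> infsum (\<lambda>n. \<bar>b n\<bar> * K) UNIV"
      using \<open>0 \<le> K\<close> by (intro infsum_nonneg) simp
    then have "(\<lambda>m. norm (\<bar>a m\<bar> * infsum (\<lambda>n. \<bar>b n\<bar> * K) UNIV)) summable_on UNIV"
      by (intro norm_summable_imp_summable_on) (simp add: abs_mult summable_mult2 a)
    then show "(\<lambda>m. norm (infsum (\<lambda>n. norm (g (m, n))) UNIV)) summable_on UNIV"
      by (simp add: g_def \<open>0 \<le> K\<close> abs_mult infsum_cmult_right')
  qed
  then have "(\<lambda>x. norm (g x)) summable_on UNIV"
    by (simp only: UNIV_Times_UNIV)
  then show ?thesis
    by (rule Infinite_Sum.abs_summable_on_comparison_test)
       (use v \<open>0 \<le> K\<close> in \<open>auto simp: g_def abs_mult mult.assoc intro!: mult_left_mono\<close>)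
qed

lemma summable_norm_convolution_scaleR:
  fixes a b :: "nat \<Rightarrow> real" and v :: "nat \<Rightarrow> 'a::real_normed_vector"
  assumes a: "summable (\<lambda>n. \<bar>a n\<bar>)" and b: "summable (\<lambda>n. \<bar>b n\<bar>)"
    and v: "\<And>n. norm (v n) \<le> K"
  shows "summable (\<lambda>N. norm ((\<Sum>k\<le>N. a k * b (N - k)) *\<^sub>R v N))"
proof -
  have ab: "summable (\<lambda>N. \<Sum>k\<le>N. \<bar>a k\<bar> * \<bar>b (N - k)\<bar>)"
    using summable_Cauchy_product[of "\<lambda>n. \<bar>a n\<bar>" "\<lambda>n. \<bar>b n\<bar>"] a b by simp
  show ?thesis
  proof (rule summable_comparison_test[OF _ summable_mult2[OF ab, of K]], intro exI allI impI)
    fix N :: nat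
    have "\<bar>\<Sum>k\<le>N. a k * b (N - k)\<bar> * norm (v N) \<le> (\<Sum>k\<le>N. \<bar>a k\<bar> * \<bar>b (N - k)\<bar>) * K"
      by (rule mult_mono) (auto intro: order.trans[OF sum_abs] simp: abs_mult v sum_nonneg)
    then show "norm (norm ((\<Sum>k\<le>N. a k * b (N - k)) *\<^sub>R v N)) \<le> (\<Sum>k\<le>N. \<bar>a k\<bar> * \<bar>b (N - k)\<bar>) * K"
      by simp
  qed
qed

lemma suminf_scaleR_Cauchy_product:
  fixes a b :: "nat \<Rightarrow> real" and v :: "nat \<Rightarrow> 'a::banach"
  assumes a: "summable (\<lambda>n. \<bar>a n\<bar>)" and b: "summable (\<lambda>n. \<bar>b n\<bar>)"
    and v: "\<And>n. norm (v n) \<le> K"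
  shows "(\<Sum>m. a m *\<^sub>R (\<Sum>n. b n *\<^sub>R v (m + n))) = (\<Sum>N. (\<Sum>k\<le>N. a k * b (N - k)) *\<^sub>R v N)"
proof -
  define f where "f = (\<lambda>(m, n). (a m * b n) *\<^sub>R v (m + n))"
  have f: "f summable_on UNIV"
    unfolding f_def by (rule abs_summable_summable[OF abs_summable_on_scaleR_shift[OF a b v]])
  have b_norm: "summable (\<lambda>n. norm (b n *\<^sub>R v (m + n)))" for m
    by (rule summable_comparison_test[OF _ summable_mult2[OF b, of K]]) (auto intro!: mult_left_mono v)
  have "norm (\<Sum>n. b n *\<^sub>R v (m + n)) \<le> (\<Sum>n. \<bar>b n\<bar> * K)" for m
  proof -
    have "norm (\<Sum>n. b n *\<^sub>R v (m + n)) \<le> (\<Sum>n. norm (b n *\<^sub>R v (m + n)))"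
      by (rule summable_norm[OF b_norm])
    also have "\<dots> \<le> (\<Sum>n. \<bar>b n\<bar> * K)"
      using b_norm[of m] by (intro suminf_le) (auto intro!: mult_left_mono v summable_mult2 b)
    finally show ?thesis .
  qed
  then have a_norm: "summable (\<lambda>m. norm (a m *\<^sub>R (\<Sum>n. b n *\<^sub>R v (m + n))))"
    by (intro summable_comparison_test[OF _ summable_mult2[OF a, of "\<Sum>n. \<bar>b n\<bar> * K"]])
       (auto intro!: mult_left_mono)
  have inner: "a m *\<^sub>R (\<Sum>n. b n *\<^sub>R v (m + n)) = infsum (\<lambda>n. f (m, n)) UNIV" for m
    by (simp add: infsum_eq_suminf_norm_summable[OF b_norm, symmetric] f_def
        flip: infsum_scaleR_right)
  have "(\<Sum>m. a m *\<^sub>R (\<Sum>n. b n *\<^sub>R v (m + n)))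
      = infsum (\<lambda>m. a m *\<^sub>R (\<Sum>n. b n *\<^sub>R v (m + n))) UNIV"
    by (rule infsum_eq_suminf_norm_summable[OF a_norm, symmetric])
  also have "\<dots> = infsum (\<lambda>m. infsum (\<lambda>n. f (m, n)) UNIV) UNIV"
    by (simp only: inner)
  also have "\<dots> = infsum f UNIV"
    using infsum_Sigma_banach[of f UNIV "\<lambda>_. UNIV"] f by simp
  also have "\<dots> = infsum (\<lambda>N. \<Sum>k\<le>N. f (k, N - k)) UNIV"
    by (rule infsum_nat_prod_diagonal[OF f])
  also have "\<dots> = infsum (\<lambda>N. (\<Sum>k\<le>N. a k * b (N - k)) *\<^sub>R v N) UNIV"
    by (simp add: f_def scaleR_sum_left)
  also have "\<dots> = (\<Sum>N. (\<Sum>k\<le>N. a k * b (N - k)) *\<^sub>R v N)"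
    by (rule infsum_eq_suminf_norm_summable[OF summable_norm_convolution_scaleR[OF a b v]])
  finally show ?thesis .
qed


instance chilbert \<subseteq> banach ..

lemma clinear_funpow: "clinear (Y::'a::cvec \<Rightarrow> 'a) \<Longrightarrow> clinear (Y ^^ n)"
  by (induction n) (simp_all add: clinear_def)

lemma bounded_linear_funpow: "bounded_linear (Y::'a::real_normed_vector \<Rightarrow> 'a) \<Longrightarrow> bounded_linear (Y ^^ n)"
proof (induction n)
  case (Suc n)
  then show ?case
    using bounded_linear_compose[of Y "Y ^^ n"] by (simp add: o_def)
qed (simp add: id_def)

lemma cinner_funpow_selfadjoint:
  assumes "\<And>x y. cinner ((Y::'a::complex_inner \<Rightarrow> 'a) x) y = cinner x (Y y)"
  shows "cinner ((Y ^^ n) x) y = cinner x ((Y ^^ n) y)"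
  by (induction n arbitrary: x y) (simp_all add: assms funpow_swap1)

lemma norm_funpow_le:
  assumes "\<And>x. norm ((Y::'a::real_normed_vector \<Rightarrow> 'a) x) \<le> norm x"
  shows "norm ((Y ^^ n) x) \<le> norm x"
  by (induction n) (auto intro: order_trans[OF assms])

lemma Re_cinner_funpow_le:
  assumes "\<And>x. norm ((Y::'a::complex_inner \<Rightarrow> 'a) x) \<le> norm x"
  shows "Re (cinner h ((Y ^^ n) h)) \<le> (norm h)\<^sup>2"
proof -
  have "Re (cinner h ((Y ^^ n) h)) \<le> norm h * norm ((Y ^^ n) h)"
    using complex_Re_le_cmod cinner_cauchy_schwarz order_trans by blast
  also have "\<dots> \<le> norm h * norm h"
    by (intro mult_left_mono norm_funpow_le assms) simp
  finally show ?thesis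
    by (simp add: power2_eq_square)
qed

lemma funpow_commute:
  assumes "\<And>x. L ((Y::'a \<Rightarrow> 'a) x) = Y (L x)"
  shows "L ((Y ^^ n) x) = (Y ^^ n) (L x)"
  by (induction n) (simp_all add: assms)

text \<open>For a self-adjoint contraction \<open>Y\<close>, this is the positive square root of \<open>1 - Y\<close>.\<close>

definition sqrt_series :: "('h::chilbert \<Rightarrow> 'h) \<Rightarrow> 'h \<Rightarrow> 'h" where
  "sqrt_series Y h = (\<Sum>n. sqrt_coeff n *\<^sub>R (Y ^^ n) h)"

context
  fixes Y :: "'h::chilbert \<Rightarrow> 'h"
  assumes clinear_Y: "clinear Y" and bounded_Y: "bounded_linear Y"
    and contraction_Y: "\<And>x. norm (Y x) \<le> norm x"
begin

lemma summable_norm_sqrt_series: "summable (\<lambda>n. norm (sqrt_coeff n *\<^sub>R (Y ^^ n) h))"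
  by (rule summable_comparison_test[OF _ summable_mult2[OF summable_abs_sqrt_coeff, of "norm h"]])
     (auto intro!: mult_left_mono norm_funpow_le contraction_Y)

lemma summable_sqrt_series: "summable (\<lambda>n. sqrt_coeff n *\<^sub>R (Y ^^ n) h)"
  by (rule summable_norm_cancel[OF summable_norm_sqrt_series])

lemma sqrt_series_commute:
  assumes "bounded_linear L" "clinear L" "\<And>x. L (Y x) = Y (L x)"
  shows "L (sqrt_series Y h) = sqrt_series Y (L h)"
  unfolding sqrt_series_def bounded_linear.suminf[OF assms(1) summable_sqrt_series]
  by (simp add: clinear_scaleR[OF assms(2)] funpow_commute[where L=L and Y=Y, OF assms(3)])

lemma clinear_sqrt_series: "clinear (sqrt_series Y)"
proof -
  have "c *\<^sub>C sqrt_series Y x = (\<Sum>n. c *\<^sub>C (sqrt_coeff n *\<^sub>R (Y ^^ n) x))" for c x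
    unfolding sqrt_series_def by (rule bounded_linear.suminf[OF bounded_linear_scaleC summable_sqrt_series])
  then show ?thesis
    unfolding clinear_def sqrt_series_def
    by (simp add: suminf_add[OF summable_sqrt_series summable_sqrt_series] scaleR_add_right
        clinear_add[OF clinear_funpow[OF clinear_Y]] clinear_scaleC[OF clinear_funpow[OF clinear_Y]]
        scaleC_scaleR)
qed

text \<open>Only the constant coefficient is positive, and \<open>\<langle>h, Y\<^sup>n h\<rangle> \<le> \<parallel>h\<parallel>\<^sup>2\<close>; so the quadratic form
  is bounded below by \<open>(\<Sum>n. sqrt_coeff n) * \<parallel>h\<parallel>\<^sup>2 \<ge> 0\<close>.\<close>

lemma positive_op_sqrt_series:
  assumes selfadjoint: "\<And>x y. cinner (Y x) y = cinner x (Y y)"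
  shows "positive_op (sqrt_series Y)"
  unfolding positive_op_def
proof
  fix h
  define r where "r n = cinner h ((Y ^^ n) h)" for n
  have real: "Im (r n) = 0" for n
    using arg_cong[OF cinner_commute[of h "(Y ^^ n) h"], of Im]
    by (simp add: r_def cinner_funpow_selfadjoint[OF selfadjoint])
  have r_le: "Re (r n) \<le> (norm h)\<^sup>2" for n
    unfolding r_def by (rule Re_cinner_funpow_le[OF contraction_Y])
  have sums: "(\<lambda>n. of_real (sqrt_coeff n) * r n) sums cinner h (sqrt_series Y h)"
    unfolding sqrt_series_def r_def
    using bounded_linear.sums[OF bounded_linear_cinner_right summable_sums[OF summable_sqrt_series]]
    by (simp add: cinner_scaleR_right)
  have "(\<lambda>n. Im (of_real (sqrt_coeff n) * r n)) sums Im (cinner h (sqrt_series Y h))"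
    by (rule sums_Im[OF sums])
  then have "Im (cinner h (sqrt_series Y h)) = 0"
    by (simp add: real sums_iff)
  moreover have "0 \<le> Re (cinner h (sqrt_series Y h))"
  proof -
    have Re_sums: "(\<lambda>n. sqrt_coeff n * Re (r n)) sums Re (cinner h (sqrt_series Y h))"
      using sums_Re[OF sums] by simp
    have lower_sums: "(\<lambda>n. sqrt_coeff n * (norm h)\<^sup>2) sums ((\<Sum>n. sqrt_coeff n) * (norm h)\<^sup>2)"
      by (rule sums_mult2[OF summable_sums[OF summable_sqrt_coeff]])
    have le: "sqrt_coeff n * (norm h)\<^sup>2 \<le> sqrt_coeff n * Re (r n)" for n
    proof (cases "n = 0")
      case False
      then show ?thesis
        using sqrt_coeff_nonpos[of n] r_le[of n] by (simp add: mult_left_mono_neg)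
    qed (simp add: r_def cinner_self)
    have "(\<Sum>n. sqrt_coeff n) * (norm h)\<^sup>2 \<le> Re (cinner h (sqrt_series Y h))"
      by (rule sums_le[OF le lower_sums Re_sums])
    moreover have "0 \<le> (\<Sum>n. sqrt_coeff n) * (norm h)\<^sup>2"
      using suminf_sqrt_coeff_nonneg by simp
    ultimately show ?thesis
      by linarith
  qed
  ultimately show "cinner h (sqrt_series Y h) \<in> \<real> \<and> 0 \<le> Re (cinner h (sqrt_series Y h))"
    by (simp add: complex_is_Real_iff)
qed

lemma sqrt_series_square: "sqrt_series Y (sqrt_series Y h) = h - Y h"
proof -
  have "(Y ^^ m) (sqrt_series Y h) = (\<Sum>n. sqrt_coeff n *\<^sub>R (Y ^^ (m + n)) h)" for m
    unfolding sqrt_series_def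
      bounded_linear.suminf[OF bounded_linear_funpow[OF bounded_Y] summable_sqrt_series]
    by (simp add: clinear_scaleR[OF clinear_funpow[OF clinear_Y]] funpow_add)
  then have "sqrt_series Y (sqrt_series Y h)
      = (\<Sum>m. sqrt_coeff m *\<^sub>R (\<Sum>n. sqrt_coeff n *\<^sub>R (Y ^^ (m + n)) h))"
    by (simp add: sqrt_series_def)
  also have "\<dots> = (\<Sum>N. (\<Sum>k\<le>N. sqrt_coeff k * sqrt_coeff (N - k)) *\<^sub>R (Y ^^ N) h)"
    by (rule suminf_scaleR_Cauchy_product[OF summable_abs_sqrt_coeff summable_abs_sqrt_coeff])
       (rule norm_funpow_le[OF contraction_Y])
  also have "\<dots> = (\<Sum>N\<in>{0, 1}. (if N = 0 then 1 else if N = 1 then -1 else 0) *\<^sub>R (Y ^^ N) h)"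
    unfolding sqrt_coeff_convolution by (rule suminf_finite) auto
  also have "\<dots> = h - Y h"
    by simp
  finally show ?thesis .
qed

end

lemma norm_diff_scaled_square_le:
  fixes A :: "'h::chilbert \<Rightarrow> 'h"
  assumes A: "clinear A" "bounded_linear A" "positive_op A"
    and s: "0 < s" "s * (onorm A)\<^sup>2 \<le> 1"
  shows "norm (h - s *\<^sub>R A (A h)) \<le> norm h"
proof -
  define u where "u = A (A h)"
  have "inner h u = (norm (A h))\<^sup>2"
    by (simp add: u_def inner_Re_cinner cinner_self flip: positive_op_selfadjoint[OF A(1,3)])
  then have "2 * s * inner h u = 2 * (s * (norm (A h))\<^sup>2)"
    by simp
  moreover have "s\<^sup>2 * (norm u)\<^sup>2 \<le> s * (norm (A h))\<^sup>2"
  proof -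
    have "(norm u)\<^sup>2 \<le> (onorm A * norm (A h))\<^sup>2"
      unfolding u_def using onorm[OF A(2)] by (intro power_mono) auto
    then have "s\<^sup>2 * (norm u)\<^sup>2 \<le> s\<^sup>2 * (onorm A * norm (A h))\<^sup>2"
      by (rule mult_left_mono) simp
    also have "\<dots> = s * (s * (onorm A)\<^sup>2) * (norm (A h))\<^sup>2"
      by (simp add: power_mult_distrib power2_eq_square mult_ac)
    also have "\<dots> \<le> s * (norm (A h))\<^sup>2"
      using s by (intro mult_right_mono) (auto intro: mult_left_le)
    finally show ?thesis .
  qed
  moreover have "(norm (h - s *\<^sub>R u))\<^sup>2 = (norm h)\<^sup>2 - 2 * s * inner h u + s\<^sup>2 * (norm u)\<^sup>2"
    unfolding power2_norm_eq_inner
    by (simp add: inner_diff_left inner_diff_right inner_commute[of u h] algebra_simps power2_eq_square)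
  moreover have "0 \<le> s * (norm (A h))\<^sup>2"
    using s by simp
  ultimately have "(norm (h - s *\<^sub>R u))\<^sup>2 \<le> (norm h)\<^sup>2"
    by linarith
  then show ?thesis
    unfolding u_def by (rule power2_le_imp_le) simp
qed

text \<open>Scaling \<open>A\<close> makes \<open>Y = 1 - s A\<^sup>2\<close> a self-adjoint contraction, so \<open>sqrt_series Y\<close> is a
  positive square root of \<open>s A\<^sup>2\<close> commuting with everything that commutes with \<open>Y\<close>; in particular
  with every positive square root of \<open>A\<^sup>2\<close>.\<close>

lemma scaled_positive_sqrt_eq_sqrt_series:
  fixes A X :: "'h::chilbert \<Rightarrow> 'h"
  assumes A: "clinear A" "bounded_linear A" "positive_op A"
    and s: "0 < s" "s * (onorm A)\<^sup>2 \<le> 1"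
    and X: "clinear X" "bounded_linear X" "positive_op X" and XX: "\<And>h. X (X h) = A (A h)"
  shows "sqrt s *\<^sub>R X h = sqrt_series (\<lambda>h. h - s *\<^sub>R A (A h)) h"
proof -
  define Y where "Y = (\<lambda>h. h - s *\<^sub>R A (A h))"
  have clinear_Y: "clinear Y"
    unfolding Y_def clinear_def
    by (simp add: clinear_add[OF A(1)] clinear_scaleC[OF A(1)] scaleC_diff_right scaleC_scaleR
        scaleR_add_right)
  have bounded_Y: "bounded_linear Y"
    unfolding Y_def
    by (intro bounded_linear_sub bounded_linear_ident bounded_linear_compose[OF bounded_linear_scaleR_right]
        bounded_linear_compose[OF A(2) A(2)])
  have contraction_Y: "norm (Y h) \<le> norm h" for h
    unfolding Y_def by (rule norm_diff_scaled_square_le[OF A s])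
  have selfadjoint_Y: "cinner (Y x) y = cinner x (Y y)" for x y
    by (simp add: Y_def cinner_diff_left cinner_diff_right cinner_scaleR_left cinner_scaleR_right
        positive_op_selfadjoint[OF A(1,3)])
  define R where "R = sqrt_series Y"
  define X' where "X' = (\<lambda>h. sqrt s *\<^sub>R X h)"
  have X': "clinear X'" "bounded_linear X'" "positive_op X'"
    using X s unfolding X'_def
    by (simp_all add: clinear_def scaleR_add_right scaleC_scaleR bounded_linear_scaleR_right
        bounded_linear_compose[OF bounded_linear_scaleR_right] positive_op_scaleR)
  have "X' (Y h) = Y (X' h)" for h
    by (simp add: X'_def Y_def clinear_diff[OF X(1)] clinear_scaleR[OF X(1)] clinear_scaleR[OF A(1)]
        clinear_diff[OF A(1)] flip: XX) (simp add: XX algebra_simps)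
  then have "X' (R h) = R (X' h)" for h
    unfolding R_def by (rule sqrt_series_commute[OF clinear_Y bounded_Y contraction_Y X'(2,1)])
  moreover have "X' (X' h) = R (R h)" for h
    using s unfolding R_def sqrt_series_square[OF clinear_Y bounded_Y contraction_Y]
    by (simp add: X'_def clinear_scaleR[OF X(1)] XX Y_def)
  ultimately have "X' h = R h"
    using positive_op_commuting_square_eq[OF X'(1,3)] clinear_sqrt_series[OF clinear_Y bounded_Y contraction_Y]
      positive_op_sqrt_series[OF clinear_Y bounded_Y contraction_Y selfadjoint_Y]
    unfolding R_def by blast
  then show ?thesis
    by (simp add: X'_def R_def Y_def)
qed

lemma positive_sqrt_unique:
  fixes A B :: "'h::chilbert \<Rightarrow> 'h"
  assumes "A \<in> bop" "positive_op A" "B \<in> bop" "positive_op B" "A \<circ> A = B \<circ> B"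
  shows "A = B"
proof
  fix h
  define s where "s = 1 / ((onorm A)\<^sup>2 + 1)"
  have s: "0 < s" "s * (onorm A)\<^sup>2 \<le> 1"
    by (simp_all add: s_def add_pos_nonneg field_simps)
  have A: "clinear A" "bounded_linear A" and B: "clinear B" "bounded_linear B"
    using assms(1,3) by (simp_all add: bop_def)
  have "B (B h) = A (A h)" for h
    using fun_cong[OF assms(5), of h] by simp
  then have "sqrt s *\<^sub>R A h = sqrt s *\<^sub>R B h"
    using scaled_positive_sqrt_eq_sqrt_series[OF A assms(2) s A assms(2)]
      scaled_positive_sqrt_eq_sqrt_series[OF A assms(2) s B assms(4)]
    by metis
  then show "A h = B h"
    using s by simp
qed

lemma op_abs_positive_op:
  assumes "P \<in> bop" "positive_op (P::'h::chilbert \<Rightarrow> 'h)"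
  shows "op_abs P = P"
proof -
  have "op_abs P = op_sqrt (P \<circ> P)"
    using assms by (simp add: op_abs_def bop_def adjoint_positive_op)
  also have "\<dots> = P"
    unfolding op_sqrt_def
  proof (rule the_equality)
    show "P \<in> bop \<and> positive_op P \<and> P \<circ> P = P \<circ> P"
      using assms by simp
  qed (use assms positive_sqrt_unique in blast)
  finally show ?thesis .
qed


lemma Re_cinner_le_onorm:
  assumes "bounded_linear (P::'a::complex_inner \<Rightarrow> 'a)"
  shows "Re (cinner (P v) v) \<le> onorm P * (norm v)\<^sup>2"
proof -
  have "Re (cinner (P v) v) \<le> norm (P v) * norm v"
    using complex_Re_le_cmod cinner_cauchy_schwarz order_trans by blast
  also have "\<dots> \<le> onorm P * norm v * norm v"
    by (intro mult_right_mono onorm[OF assms]) simp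
  finally show ?thesis
    by (simp add: power2_eq_square mult.assoc)
qed

lemma sesquilinear_polarization:
  fixes G :: "'e::cvec \<Rightarrow> 'e \<Rightarrow> complex"
  assumes "\<And>u v w. G (u + v) w = G u w + G v w" "\<And>c u w. G (c *\<^sub>C u) w = cnj c * G u w"
    and "\<And>u v w. G u (v + w) = G u v + G u w" "\<And>c u w. G u (c *\<^sub>C w) = c * G u w"
  shows "4 * G x y = G (x + y) (x + y) - G (x + (-1) *\<^sub>C y) (x + (-1) *\<^sub>C y)
      - \<i> * G (x + \<i> *\<^sub>C y) (x + \<i> *\<^sub>C y) + \<i> * G (x + (-\<i>) *\<^sub>C y) (x + (-\<i>) *\<^sub>C y)"
  by (simp add: assms algebra_simps)

context
  fixes A :: "('h::chilbert \<Rightarrow> 'h) set" and act :: "'e::cvec \<Rightarrow> ('h \<Rightarrow> 'h) \<Rightarrow> 'e"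
    and ip :: "'e \<Rightarrow> 'e \<Rightarrow> ('h \<Rightarrow> 'h)"
  assumes cstar: "cstar_subalg A" and module: "hilbert_module A act ip"
begin

lemma ip_in_A: "ip x y \<in> A"
  using module by (simp add: hilbert_module_def)

lemma ip_in_bop: "ip x y \<in> bop"
  using ip_in_A cstar by (auto simp: cstar_subalg_def)

lemma clinear_ip: "clinear (ip x y)"
  using ip_in_bop by (simp add: bop_def)

lemma bounded_linear_ip: "bounded_linear (ip x y)"
  using ip_in_bop by (simp add: bop_def)

lemma ip_add_right: "ip x (y + z) = (\<lambda>h. ip x y h + ip x z h)"
  using module by (simp add: hilbert_module_def)

lemma ip_scaleC_right: "ip x (c *\<^sub>C y) = (\<lambda>h. c *\<^sub>C ip x y h)"
  using module by (simp add: hilbert_module_def)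

lemma ip_act: "a \<in> A \<Longrightarrow> ip x (act y a) = ip x y \<circ> a"
  using module by (simp add: hilbert_module_def)

lemma positive_op_ip_self: "positive_op (ip x x)"
  using module by (simp add: hilbert_module_def)

lemma ip_self_eq_0_iff: "ip x x = (\<lambda>h. 0) \<longleftrightarrow> x = 0"
  using module by (simp add: hilbert_module_def)

lemma adjoint_ip: "adjoint (ip x y) = ip y x"
  using module by (simp add: hilbert_module_def)

lemma cinner_ip_swap: "cinner (ip x y h) k = cinner h (ip y x k)"
  using cinner_adjoint[OF clinear_ip bounded_linear_ip, of x y h k] by (simp add: adjoint_ip)

lemma cinner_ip_cnj: "cinner k (ip x z h) = cnj (cinner h (ip z x k))"
  by (subst cinner_commute) (simp only: cinner_ip_swap)

lemma ip_add_left: "ip (x + y) z = (\<lambda>h. ip x z h + ip y z h)"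
proof (intro ext cinner_ext)
  fix h k
  have "cinner k (ip (x + y) z h) = cnj (cinner h (ip z (x + y) k))"
    by (rule cinner_ip_cnj)
  also have "\<dots> = cnj (cinner h (ip z x k)) + cnj (cinner h (ip z y k))"
    by (simp only: ip_add_right cinner_add_right complex_cnj_add)
  also have "\<dots> = cinner k (ip x z h + ip y z h)"
    by (simp only: cinner_ip_cnj[of k x z h] cinner_ip_cnj[of k y z h] cinner_add_right)
  finally show "cinner k (ip (x + y) z h) = cinner k (ip x z h + ip y z h)" .
qed

lemma ip_scaleC_left: "ip (c *\<^sub>C x) z = (\<lambda>h. cnj c *\<^sub>C ip x z h)"
proof (intro ext cinner_ext)
  fix h k
  have "cinner k (ip (c *\<^sub>C x) z h) = cnj (cinner h (ip z (c *\<^sub>C x) k))"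
    by (rule cinner_ip_cnj)
  also have "\<dots> = cnj c * cnj (cinner h (ip z x k))"
    by (simp only: ip_scaleC_right cinner_scaleC_right complex_cnj_mult)
  also have "\<dots> = cinner k (cnj c *\<^sub>C ip x z h)"
    by (simp only: cinner_ip_cnj[of k x z h] cinner_scaleC_right)
  finally show "cinner k (ip (c *\<^sub>C x) z h) = cinner k (cnj c *\<^sub>C ip x z h)" .
qed

lemma ip_diff_right: "ip x (y - z) = (\<lambda>h. ip x y h - ip x z h)"
  using ip_add_right[of x y "-z"] ip_scaleC_right[of x "-1" z]
  by (simp add: scaleC_minus1)

lemma mnorm_nonneg: "0 \<le> mnorm ip x"
  by (simp add: mnorm_def onorm_pos_le[OF bounded_linear_ip])

lemma power2_mnorm: "(mnorm ip x)\<^sup>2 = onorm (ip x x)"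
  by (simp add: mnorm_def onorm_pos_le[OF bounded_linear_ip])

lemma mnorm_eq_0_iff: "mnorm ip x = 0 \<longleftrightarrow> x = 0"
  using onorm_eq_0[OF bounded_linear_ip, of x x] ip_self_eq_0_iff[of x]
  by (auto simp: mnorm_def fun_eq_iff onorm_pos_le[OF bounded_linear_ip])

lemma mnorm_zero [simp]: "mnorm ip 0 = 0"
  using mnorm_eq_0_iff by simp

lemma mnorm_scaleC: "mnorm ip (c *\<^sub>C x) = cmod c * mnorm ip x"
proof -
  have "ip (c *\<^sub>C x) (c *\<^sub>C x) = (\<lambda>h. (cmod c)\<^sup>2 *\<^sub>R ip x x h)"
  proof
    fix h
    have "ip (c *\<^sub>C x) (c *\<^sub>C x) h = (cnj c * c) *\<^sub>C ip x x h"
      by (simp add: ip_scaleC_left ip_scaleC_right scaleC_scaleC mult.commute)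
    also have "cnj c * c = of_real ((cmod c)\<^sup>2)"
      by (simp add: complex_norm_square mult.commute del: of_real_power)
    finally show "ip (c *\<^sub>C x) (c *\<^sub>C x) h = (cmod c)\<^sup>2 *\<^sub>R ip x x h"
      by (simp only: scaleR_scaleC)
  qed
  then have "onorm (ip (c *\<^sub>C x) (c *\<^sub>C x)) = (cmod c)\<^sup>2 * onorm (ip x x)"
    by (simp add: onorm_scaleR[OF bounded_linear_ip])
  then show ?thesis
    by (simp add: mnorm_def real_sqrt_mult)
qed

text \<open>The key instance of positivity: \<open>\<langle>z, z\<rangle> \<ge> 0\<close> for \<open>z = x \<cdot> t\<langle>x, y\<rangle> - y\<close>, evaluated at \<open>h\<close>.\<close>

lemma ip_quadratic_nonneg:
  fixes x y :: 'e and h :: 'h and t :: real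
  defines "u \<equiv> ip x y h"
  shows "0 \<le> (onorm (ip x x) * (norm u)\<^sup>2) * t\<^sup>2 + 2 * (- (norm u)\<^sup>2) * t + onorm (ip y y) * (norm h)\<^sup>2"
proof -
  define a where "a = (\<lambda>k. complex_of_real t *\<^sub>C ip x y k)"
  have "a \<in> A"
    using cstar ip_in_A unfolding a_def cstar_subalg_def by blast
  define z where "z = act x a - y"
  have ah: "a h = t *\<^sub>R u"
    by (simp add: a_def u_def scaleR_scaleC)
  have "ip z z h = ip z x (a h) - ip z y h"
    by (simp add: z_def ip_diff_right ip_act[OF \<open>a \<in> A\<close>])
  then have "cinner h (ip z z h) = cinner (ip x z h) (a h) - cinner (ip y z h) h"
    by (simp add: cinner_diff_right cinner_ip_swap)
  also have "ip x z h = ip x x (a h) - u" "ip y z h = ip y x (a h) - ip y y h"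
    by (simp_all add: z_def ip_diff_right ip_act[OF \<open>a \<in> A\<close>] u_def)
  then have "cinner (ip x z h) (a h) - cinner (ip y z h) h
      = cinner (ip x x (a h)) (a h) - cinner u (a h) - cinner (a h) u + cinner (ip y y h) h"
    by (simp add: cinner_diff_left cinner_ip_swap u_def)
  also have "\<dots> = of_real (t * t) * cinner (ip x x u) u - of_real (2 * t * (norm u)\<^sup>2) + cinner (ip y y h) h"
    using clinear_scaleR[OF clinear_ip, of x x t u]
    by (simp add: ah cinner_scaleR_left cinner_scaleR_right cinner_self algebra_simps)
  finally have "Re (cinner h (ip z z h))
      = t * t * Re (cinner (ip x x u) u) - 2 * t * (norm u)\<^sup>2 + Re (cinner (ip y y h) h)"
    by simp
  moreover have "0 \<le> Re (cinner h (ip z z h))"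
    by (rule positive_op_Re[OF positive_op_ip_self])
  moreover have "t * t * Re (cinner (ip x x u) u) \<le> t * t * (onorm (ip x x) * (norm u)\<^sup>2)"
    by (intro mult_left_mono Re_cinner_le_onorm bounded_linear_ip) simp
  moreover have "Re (cinner (ip y y h) h) \<le> onorm (ip y y) * (norm h)\<^sup>2"
    by (rule Re_cinner_le_onorm[OF bounded_linear_ip])
  ultimately show ?thesis
    by (simp add: power2_eq_square algebra_simps)
qed

lemma onorm_ip_cauchy_schwarz: "onorm (ip x y) \<le> mnorm ip x * mnorm ip y"
proof -
  have "(norm (ip x y h))\<^sup>2 \<le> onorm (ip x x) * onorm (ip y y) * (norm h)\<^sup>2" for h
  proof (cases "ip x y h = 0")
    case False
    define n where "n = (norm (ip x y h))\<^sup>2"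
    have "0 < n"
      using False by (simp add: n_def)
    have "(- n)\<^sup>2 \<le> (onorm (ip x x) * n) * (onorm (ip y y) * (norm h)\<^sup>2)"
      unfolding n_def
      by (rule quadratic_nonneg_discriminant[OF ip_quadratic_nonneg])
         (simp add: onorm_pos_le[OF bounded_linear_ip])
    then have "n * n \<le> n * (onorm (ip x x) * onorm (ip y y) * (norm h)\<^sup>2)"
      by (simp add: power2_eq_square mult_ac)
    with \<open>0 < n\<close> have "n \<le> onorm (ip x x) * onorm (ip y y) * (norm h)\<^sup>2"
      using mult_le_cancel_left_pos by blast
    then show ?thesis
      by (simp add: n_def)
  qed (simp add: onorm_pos_le[OF bounded_linear_ip])
  then have "onorm (ip x y) \<le> sqrt (onorm (ip x x)) * sqrt (onorm (ip y y))"
  proof (intro onorm_bound)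
    fix h
    assume "\<And>h. (norm (ip x y h))\<^sup>2 \<le> onorm (ip x x) * onorm (ip y y) * (norm h)\<^sup>2"
    then have "(norm (ip x y h))\<^sup>2 \<le> (sqrt (onorm (ip x x)) * sqrt (onorm (ip y y)) * norm h)\<^sup>2"
      by (simp add: power_mult_distrib onorm_pos_le[OF bounded_linear_ip])
    then show "norm (ip x y h) \<le> sqrt (onorm (ip x x)) * sqrt (onorm (ip y y)) * norm h"
      by (rule power2_le_imp_le) (simp add: onorm_pos_le[OF bounded_linear_ip])
  qed (simp add: onorm_pos_le[OF bounded_linear_ip])
  then show ?thesis
    by (simp add: mnorm_def)
qed

lemma mnorm_triangle: "mnorm ip (x + y) \<le> mnorm ip x + mnorm ip y"
proof -
  have "ip (x + y) (x + y) = (\<lambda>h. (ip x x h + ip x y h) + (ip y x h + ip y y h))"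
    by (simp add: ip_add_left ip_add_right add_ac)
  moreover have bounded: "bounded_linear (\<lambda>h. ip x x h + ip x y h)" "bounded_linear (\<lambda>h. ip y x h + ip y y h)"
    by (intro bounded_linear_add bounded_linear_ip)+
  ultimately have "onorm (ip (x + y) (x + y))
      \<le> onorm (\<lambda>h. ip x x h + ip x y h) + onorm (\<lambda>h. ip y x h + ip y y h)"
    by (simp add: onorm_triangle)
  also have "\<dots> \<le> (onorm (ip x x) + onorm (ip x y)) + (onorm (ip y x) + onorm (ip y y))"
    by (intro add_mono onorm_triangle bounded_linear_ip)
  also have "\<dots> \<le> ((mnorm ip x)\<^sup>2 + mnorm ip x * mnorm ip y) + (mnorm ip y * mnorm ip x + (mnorm ip y)\<^sup>2)"
    by (intro add_mono onorm_ip_cauchy_schwarz) (simp_all add: power2_mnorm)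
  also have "\<dots> = (mnorm ip x + mnorm ip y)\<^sup>2"
    by (simp add: power2_eq_square algebra_simps)
  finally have "(mnorm ip (x + y))\<^sup>2 \<le> (mnorm ip x + mnorm ip y)\<^sup>2"
    by (simp add: power2_mnorm)
  then show ?thesis
    by (rule power2_le_imp_le) (simp add: mnorm_nonneg add_nonneg_nonneg)
qed

lemma mnorm_minus: "mnorm ip (- x) = mnorm ip x"
  using mnorm_scaleC[of "-1" x] by (simp add: scaleC_minus1)

lemma mopnorm_nonneg:
  assumes "clinear D" "mbounded ip D"
  shows "0 \<le> mopnorm ip D"
  and mnorm_le_mopnorm: "mnorm ip (D z) \<le> mopnorm ip D * mnorm ip z"
proof -
  define M where "M = {mnorm ip (D x) | x. mnorm ip x \<le> 1}"
  obtain K where K: "\<And>x. mnorm ip (D x) \<le> K * mnorm ip x"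
    using assms(2) by (auto simp: mbounded_def)
  have "bdd_above M"
  proof (rule bdd_aboveI)
    fix m
    assume "m \<in> M"
    then obtain x where "m = mnorm ip (D x)" "mnorm ip x \<le> 1"
      by (auto simp: M_def)
    have "mnorm ip (D x) \<le> max K 0 * mnorm ip x"
      using K[of x] mnorm_nonneg[of x] by (smt (verit) mult_right_mono max.cobounded1)
    also have "\<dots> \<le> max K 0"
      using \<open>mnorm ip x \<le> 1\<close> by (simp add: mult_left_le)
    finally show "m \<le> max K 0"
      using \<open>m = mnorm ip (D x)\<close> by simp
  qed
  have D0: "D 0 = 0"
    by (rule clinear_zero[OF assms(1)])
  have "0 \<in> M"
    unfolding M_def using D0 by (auto intro!: exI[of _ 0])
  then show "0 \<le> mopnorm ip D"
    unfolding mopnorm_def M_def[symmetric] using \<open>bdd_above M\<close> by (rule cSup_upper)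
  show "mnorm ip (D z) \<le> mopnorm ip D * mnorm ip z"
  proof (cases "z = 0")
    case False
    define m where "m = mnorm ip z"
    have "0 < m"
      using False mnorm_nonneg[of z] mnorm_eq_0_iff[of z] by (simp add: m_def)
    have "mnorm ip (D z) / m = mnorm ip (D (of_real (1 / m) *\<^sub>C z))"
      using \<open>0 < m\<close> by (simp add: clinear_scaleC[OF assms(1)] mnorm_scaleC norm_divide)
    also have "\<dots> \<le> mopnorm ip D"
      unfolding mopnorm_def using \<open>bdd_above M\<close> \<open>0 < m\<close>
      by (intro cSup_upper) (auto simp: M_def mnorm_scaleC norm_divide m_def)
    finally show ?thesis
      using \<open>0 < m\<close> by (simp add: m_def pos_divide_le_eq)
  qed (simp add: D0)
qed

lemma ip_image_scaled:
  assumes "clinear S" "\<And>z. ip (S z) (S z) = (\<lambda>h. c *\<^sub>C ip z z h)"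
  shows "ip (S x) (S y) = (\<lambda>h. c *\<^sub>C ip x y h)"
proof (intro ext cinner_ext)
  fix h k
  define G where "G u v = cinner k (ip u v h)" for u v
  define G' where "G' u v = G (S u) (S v)" for u v
  note sesquilinear = ip_add_left ip_scaleC_left ip_add_right ip_scaleC_right cinner_add_right
    cinner_scaleC_right clinear_add[OF assms(1)] clinear_scaleC[OF assms(1)]
  have G: "G (u + v) w = G u w + G v w" "G (a *\<^sub>C u) w = cnj a * G u w"
    "G u (v + w) = G u v + G u w" "G u (a *\<^sub>C w) = a * G u w" for a u v w
    by (simp_all add: G_def sesquilinear)
  have G': "G' (u + v) w = G' u w + G' v w" "G' (a *\<^sub>C u) w = cnj a * G' u w"
    "G' u (v + w) = G' u v + G' u w" "G' u (a *\<^sub>C w) = a * G' u w" for a u v w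
    by (simp_all add: G'_def G sesquilinear)
  have diagonal: "G' z z = c * G z z" for z
    by (simp add: G'_def G_def assms(2) cinner_scaleC_right)
  have "4 * G' x y = c * (4 * G x y)"
    unfolding sesquilinear_polarization[of G', OF G'] sesquilinear_polarization[of G, OF G] diagonal
    by (simp add: algebra_simps)
  then show "cinner k (ip (S x) (S y) h) = cinner k (c *\<^sub>C ip x y h)"
    by (simp add: G'_def G_def cinner_scaleC_right)
qed

lemma mnorm_image_scaled:
  assumes "\<And>z. ip (S z) (S z) = (\<lambda>h. of_real (N\<^sup>2) *\<^sub>C ip z z h)" "0 \<le> N"
  shows "mnorm ip (S z) = N * mnorm ip z"
proof -
  have "ip (S z) (S z) = (\<lambda>h. N\<^sup>2 *\<^sub>R ip z z h)"
    by (simp only: assms(1) scaleR_scaleC)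
  then have "(mnorm ip (S z))\<^sup>2 = N\<^sup>2 * onorm (ip z z)"
    by (simp add: power2_mnorm onorm_scaleR[OF bounded_linear_ip])
  also have "\<dots> = (N * mnorm ip z)\<^sup>2"
    by (simp add: power2_mnorm power_mult_distrib)
  finally show ?thesis
    using assms(2) by (simp add: mnorm_nonneg power2_eq_iff_nonneg)
qed

context
  fixes S T :: "'e \<Rightarrow> 'e" and N \<theta> :: real
  assumes S_scaled: "\<And>x y. ip (S x) (S y) = (\<lambda>h. of_real (N\<^sup>2) *\<^sub>C ip x y h)" and "0 \<le> N"
    and T_close: "\<And>z. mnorm ip (T z - S z) \<le> \<theta> * N * mnorm ip z"
begin

lemma ip_image_scaleR: "ip (S x) (S y) = (\<lambda>h. N\<^sup>2 *\<^sub>R ip x y h)"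
  by (simp only: S_scaled scaleR_scaleC)

lemma mnorm_perturbed_bounds:
  "(1 - \<theta>) * N * mnorm ip z \<le> mnorm ip (T z)" "mnorm ip (T z) \<le> (1 + \<theta>) * N * mnorm ip z"
proof -
  have S: "mnorm ip (S z) = N * mnorm ip z"
    using mnorm_image_scaled[OF S_scaled \<open>0 \<le> N\<close>] .
  have "mnorm ip (S z) \<le> mnorm ip (T z) + mnorm ip (- (T z - S z))"
    using mnorm_triangle[of "T z" "- (T z - S z)"] by simp
  then show "(1 - \<theta>) * N * mnorm ip z \<le> mnorm ip (T z)"
    using T_close[of z] unfolding mnorm_minus S by (simp add: algebra_simps)
  have "mnorm ip (T z) \<le> mnorm ip (S z) + mnorm ip (T z - S z)"
    using mnorm_triangle[of "S z" "T z - S z"] by simp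
  then show "mnorm ip (T z) \<le> (1 + \<theta>) * N * mnorm ip z"
    using T_close[of z] by (simp add: S algebra_simps)
qed

lemma onorm_ip_perturbed_le:
  assumes "0 \<le> \<theta>"
  shows "onorm (ip (T x) (T y))
    \<le> N\<^sup>2 * onorm (ip x y) + (2 * \<theta> + \<theta>\<^sup>2) * N\<^sup>2 * mnorm ip x * mnorm ip y"
proof -
  define D where "D z = T z - S z" for z
  have bounded: "bounded_linear (\<lambda>h. ip u v h + ip u' v' h)" for u v u' v'
    by (intro bounded_linear_add bounded_linear_ip)
  have "ip (T x) (T y) = (\<lambda>h. (ip (S x) (S y) h + ip (S x) (D y) h) + ip (D x) (T y) h)"
    using ip_add_left[of "S x" "D x" "T y"] ip_add_right[of "S x" "S y" "D y"]
    by (simp add: D_def)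
  then have "onorm (ip (T x) (T y))
      \<le> onorm (\<lambda>h. ip (S x) (S y) h + ip (S x) (D y) h) + onorm (ip (D x) (T y))"
    using onorm_triangle[OF bounded[of "S x" "S y" "S x" "D y"] bounded_linear_ip] by simp
  also have "\<dots> \<le> (onorm (ip (S x) (S y)) + onorm (ip (S x) (D y))) + onorm (ip (D x) (T y))"
    by (intro add_mono onorm_triangle bounded_linear_ip order_refl)
  also have "\<dots> \<le> N\<^sup>2 * onorm (ip x y) + (N * mnorm ip x) * (\<theta> * N * mnorm ip y)
      + (\<theta> * N * mnorm ip x) * ((1 + \<theta>) * N * mnorm ip y)"
  proof (intro add_mono)
    show "onorm (ip (S x) (S y)) \<le> N\<^sup>2 * onorm (ip x y)"
      by (simp add: ip_image_scaleR onorm_scaleR[OF bounded_linear_ip])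
    show "onorm (ip (S x) (D y)) \<le> (N * mnorm ip x) * (\<theta> * N * mnorm ip y)"
      using onorm_ip_cauchy_schwarz[of "S x" "D y"] mnorm_image_scaled[OF S_scaled \<open>0 \<le> N\<close>, of x]
        T_close[of y] \<open>0 \<le> N\<close> mnorm_nonneg[of x]
      by (simp add: D_def) (meson mult_left_mono order_trans mult_nonneg_nonneg)
    show "onorm (ip (D x) (T y)) \<le> (\<theta> * N * mnorm ip x) * ((1 + \<theta>) * N * mnorm ip y)"
      using onorm_ip_cauchy_schwarz[of "D x" "T y"] mnorm_perturbed_bounds(2)[of y]
        T_close[of x] mnorm_nonneg[of "D x"] mnorm_nonneg[of "T y"] \<open>0 \<le> \<theta>\<close> \<open>0 \<le> N\<close> mnorm_nonneg[of x]
      by (simp add: D_def) (meson mult_mono order_trans mult_nonneg_nonneg)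
  qed
  also have "\<dots> = N\<^sup>2 * onorm (ip x y) + (2 * \<theta> + \<theta>\<^sup>2) * N\<^sup>2 * mnorm ip x * mnorm ip y"
    by (simp add: power2_eq_square algebra_simps)
  finally show ?thesis .
qed

lemma orth_preserving_perturbed:
  assumes "0 \<le> \<delta>" "0 \<le> \<theta>" "\<theta> < 1"
  shows "orth_preserving ip \<delta> ((\<theta>\<^sup>2 + 2 * \<theta> + \<delta>) / (1 - \<theta>)\<^sup>2) T"
  unfolding orth_preserving_def
proof (intro allI impI)
  fix x y
  assume xy: "onorm (ip x y) \<le> \<delta> * mnorm ip x * mnorm ip y"
  define \<epsilon> where "\<epsilon> = (\<theta>\<^sup>2 + 2 * \<theta> + \<delta>) / (1 - \<theta>)\<^sup>2"
  have "0 \<le> \<epsilon>"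
    using assms by (simp add: \<epsilon>_def)
  have "onorm (ip (T x) (T y)) \<le> N\<^sup>2 * (\<delta> * mnorm ip x * mnorm ip y)
      + (2 * \<theta> + \<theta>\<^sup>2) * N\<^sup>2 * mnorm ip x * mnorm ip y"
    using onorm_ip_perturbed_le[OF assms(2), of x y] mult_left_mono[OF xy, of "N\<^sup>2"] by simp
  also have "\<dots> = (\<theta>\<^sup>2 + 2 * \<theta> + \<delta>) * (N\<^sup>2 * mnorm ip x * mnorm ip y)"
    by (simp add: power2_eq_square algebra_simps)
  also have "\<dots> = (\<epsilon> * (1 - \<theta>)\<^sup>2) * (N\<^sup>2 * mnorm ip x * mnorm ip y)"
    using assms(3) by (simp add: \<epsilon>_def)
  also have "\<dots> = \<epsilon> * ((1 - \<theta>) * N * mnorm ip x) * ((1 - \<theta>) * N * mnorm ip y)"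
    by (simp add: power2_eq_square mult_ac)
  also have "\<dots> \<le> \<epsilon> * mnorm ip (T x) * mnorm ip (T y)"
    using mnorm_perturbed_bounds(1) \<open>0 \<le> \<epsilon>\<close> assms(3) \<open>0 \<le> N\<close> mnorm_nonneg
    by (intro mult_mono) simp_all
  finally show "onorm (ip (T x) (T y)) \<le> \<epsilon> * mnorm ip (T x) * mnorm ip (T y)" .
qed

end

end


theorem corollary2p5:
  fixes \<delta> \<theta> :: real
    and A :: "('h::chilbert \<Rightarrow> 'h) set"
    and act :: "'e::cvec \<Rightarrow> ('h \<Rightarrow> 'h) \<Rightarrow> 'e"
    and ip :: "'e \<Rightarrow> 'e \<Rightarrow> ('h \<Rightarrow> 'h)"
    and S T :: "'e \<Rightarrow> 'e"
  assumes "0 \<le> \<delta>" "\<delta> < 1" "0 \<le> \<theta>" "\<theta> < 1"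
    and dimH: "\<exists>u v :: 'h. \<forall>a b. a *\<^sub>C u + b *\<^sub>C v = 0 \<longrightarrow> a = 0 \<and> b = 0"
    and A: "cstar_subalg A" "kop \<subseteq> A"
    and E: "hilbert_module A act ip" "full_module A ip"
    and S: "clinear S" "mbounded ip S" "S \<noteq> (\<lambda>x. 0)"
    and Siso: "\<forall>x y. op_abs (ip (S x) (S y))
                  = (\<lambda>h. complex_of_real ((mopnorm ip S)\<^sup>2) *\<^sub>C op_abs (ip x y) h)"
    and T: "clinear T"
    and TS: "mbounded ip (\<lambda>x. T x - S x)" "mopnorm ip (\<lambda>x. T x - S x) \<le> \<theta> * mopnorm ip S"
  shows "orth_preserving ip \<delta> ((\<theta>\<^sup>2 + 2 * \<theta> + \<delta>) / (1 - \<theta>)\<^sup>2) T"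
proof -
  define N where "N = mopnorm ip S"
  have "0 \<le> N"
    unfolding N_def by (rule mopnorm_nonneg[OF A(1) E(1) S(1,2)])
  have "ip (S z) (S z) = (\<lambda>h. of_real (N\<^sup>2) *\<^sub>C ip z z h)" for z
    using Siso[rule_format, of z z]
    by (simp add: N_def op_abs_positive_op[OF ip_in_bop[OF A(1) E(1)] positive_op_ip_self[OF A(1) E(1)]])
  then have S_scaled: "ip (S x) (S y) = (\<lambda>h. of_real (N\<^sup>2) *\<^sub>C ip x y h)" for x y
    by (rule ip_image_scaled[OF A(1) E(1) S(1)])
  have "clinear (\<lambda>x. T x - S x)"
    using T S(1) by (simp add: clinear_def scaleC_diff_right)
  then have "mnorm ip (T z - S z) \<le> \<theta> * N * mnorm ip z" for z
    using mnorm_le_mopnorm[OF A(1) E(1) _ TS(1), of z] TS(2) mnorm_nonneg[OF A(1) E(1), of z]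
    by (simp add: N_def) (meson mult_right_mono order_trans)
  then show ?thesis
    by (rule orth_preserving_perturbed[OF A(1) E(1) S_scaled \<open>0 \<le> N\<close> _ assms(1,3,4)])
qed

end
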